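(* For all $\xi,\xi^*>0$ and $\eta\in(0,\infty)^p$, $$\big|\alpha_\eta(\xi,\xi^* )-\alpha_{\eta,\epsilon}(\xi,\xi^* )\big|\le \exp\Big\{\Big(N+(N+a_0)\frac{\|z\|^2}{b_0}\Big)\|W\|^2\delta\Big\}-1 .$$ In particular $\sup_{\xi,\xi^*,\eta}|\alpha_\eta(\xi,\xi^* )-\alpha_{\eta,\epsilon}(\xi,\xi^* )|=O(\delta)$ as $\delta\to0$, with constant depending only on $N,a_0,b_0,W,z$.
   Context: Fix $N,p\ge1$, $W\in\mathbb R^{N\times p}$, $z\in\mathbb R^N$, $a_0,b_0>0$, $\delta>0$; $\|\cdot\|$ is the Euclidean/operator norm. Let $\pi_\xi(t)\propto t^{-1/2}(1+t)^{-1}$. For $\eta\in(0,\infty)^p$ let $D=\mathrm{diag}(\eta_j^{-1})$. For $\xi,\xi^*>0$ let $\xi_{\max}^{-1}=\max\{\xi^{-1},(\xi^* )^{-1}\}$ and $D_\delta=\mathrm{diag}(\eta_j^{-1}\mathbf 1(\xi^{-1}_{\max}\eta_j^{-1}>\delta))$. For $t\in\{\xi,\xi^*\}$ let $M_t=I_N+t^{-1}WDW'$ and $M_{t,\delta}=I_N+t^{-1}WD_\delta W'$. Define $q_\eta(\xi,\xi^* )=\frac{|M_{\xi^*}|^{-1/2}(b_0+z'M_{\xi^*}^{-1}z)^{-(N+a_0)/2}}{|M_{\xi}|^{-1/2}(b_0+z'M_{\xi}^{-1}z)^{-(N+a_0)/2}}\cdot\frac{\pi_\xi(\xi^* )\,\xi^*}{\pi_\xi(\xi)\,\xi}$,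 let $q_{\eta,\delta}$ be the same expression with $M_t$ replaced by $M_{t,\delta}$, and set $\alpha_\eta=\min\{1,q_\eta\}$, $\alpha_{\eta,\epsilon}=\min\{1,q_{\eta,\delta}\}$. *)

theory Defs
  imports "HOL-Analysis.Analysis"
begin

text \<open>Unnormalised prior density of xi; the normalising constant cancels in q.\<close>
definition pi_xi :: "real \<Rightarrow> real" where
  "pi_xi t = t powr (-1/2) / (1 + t)"

definition Dmat :: "real^'p \<Rightarrow> real^'p^'p" where
  "Dmat eta = (\<chi> i j. if i = j then 1 / eta $ j else 0)"

definition Dmat_delta :: "real \<Rightarrow> real \<Rightarrow> real \<Rightarrow> real^'p \<Rightarrow> real^'p^'p" where
  "Dmat_delta \<delta> \<xi> \<xi>s eta =
     (\<chi> i j. if i = j \<and> max (1/\<xi>) (1/\<xi>s) * (1 / eta $ j) > \<delta> then 1 / eta $ j else 0)"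

definition Mmat :: "real^'p^'n \<Rightarrow> real^'p^'p \<Rightarrow> real \<Rightarrow> real^'n^'n" where
  "Mmat W D t = mat 1 + (1 / t) *\<^sub>R (W ** D ** transpose W)"

text \<open>Marginal-likelihood factor |M|^{-1/2} (b0 + z' M^{-1} z)^{-(N+a0)/2}.\<close>
definition lik :: "real \<Rightarrow> real \<Rightarrow> real^'n \<Rightarrow> real^'n^'n \<Rightarrow> real" where
  "lik a0 b0 z M = det M powr (-1/2) *
     (b0 + z \<bullet> (matrix_inv M *v z)) powr (- (real CARD('n) + a0) / 2)"

definition qfun :: "real \<Rightarrow> real \<Rightarrow> real^'p^'n \<Rightarrow> real^'n \<Rightarrow> real^'p^'p \<Rightarrow> real \<Rightarrow> real \<Rightarrow> real" where
  "qfun a0 b0 W z D \<xi> \<xi>s =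
     lik a0 b0 z (Mmat W D \<xi>s) / lik a0 b0 z (Mmat W D \<xi>) *
     (pi_xi \<xi>s * \<xi>s) / (pi_xi \<xi> * \<xi>)"

definition alpha :: "real \<Rightarrow> real \<Rightarrow> real^'p^'n \<Rightarrow> real^'n \<Rightarrow> real^'p \<Rightarrow> real \<Rightarrow> real \<Rightarrow> real" where
  "alpha a0 b0 W z eta \<xi> \<xi>s = min 1 (qfun a0 b0 W z (Dmat eta) \<xi> \<xi>s)"

definition alpha_approx :: "real \<Rightarrow> real \<Rightarrow> real \<Rightarrow> real^'p^'n \<Rightarrow> real^'n \<Rightarrow> real^'p \<Rightarrow> real \<Rightarrow> real \<Rightarrow> real" where
  "alpha_approx \<delta> a0 b0 W z eta \<xi> \<xi>s =
     min 1 (qfun a0 b0 W z (Dmat_delta \<delta> \<xi> \<xi>s eta) \<xi> \<xi>s)"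

end

theory Submission
  imports Defs
begin

text \<open>Write \<open>w j\<close> for the columns of \<open>W\<close>. Both \<open>M t\<close> and its truncation have the form
  \<open>I + (\<Sum>j\<in>S. g j * w j w j')\<close> with \<open>g j = 1 / (t * \<eta> j)\<close>, and the truncation drops only
  indices with \<open>g j \<le> \<delta>\<close>. Such a matrix dominates \<open>I\<close>, so by the matrix determinant lemma each
  dropped rank-one term changes \<open>ln det\<close> by at most \<open>g j * \<parallel>w j\<parallel>\<^sup>2 \<le> \<delta> * \<parallel>w j\<parallel>\<^sup>2\<close>, and
  \<open>(\<Sum>j. \<parallel>w j\<parallel>\<^sup>2) \<le> N * \<parallel>W\<parallel>\<^sup>2\<close>. The quadratic forms \<open>z' M\<^sup>-\<^sup>1 z\<close> differ by the dropped part of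
  \<open>\<Sum>j. g j * (w j \<bullet> u) * (w j \<bullet> v)\<close>, where \<open>u\<close>, \<open>v\<close> solve \<open>M u = z\<close> for the two matrices and so
  have norm at most \<open>\<parallel>z\<parallel>\<close>. Hence, with \<open>K\<close> the constant of the statement, each log-likelihood
  moves by at most \<open>K \<delta> / 2\<close> and \<open>ln q\<close> by at most \<open>K \<delta>\<close>;
  finally \<open>min 1\<close> turns a multiplicative error \<open>exp (\<plusminus>K \<delta>)\<close> into an additive one of at most
  \<open>exp (K \<delta>) - 1\<close>.\<close>

section \<open>Determinants of rank-one updates\<close>

definition outer :: "real^'n \<Rightarrow> real^'m \<Rightarrow> real^'m^'n" where
  "outer u v = (\<chi> i j. u$i * v$j)"

lemma outer_mv: "outer u v *v x = (v \<bullet> x) *\<^sub>R u"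
  by (simp add: vec_eq_iff outer_def matrix_vector_mult_def inner_vec_def sum_distrib_left mult_ac)

lemma matrix_mul_outer: "A ** outer u v = outer (A *v u) v"
  by (simp add: vec_eq_iff outer_def matrix_matrix_mult_def matrix_vector_mult_def
      sum_distrib_right mult.assoc)

lemma outer_scaleR_left: "outer (c *\<^sub>R u) v = c *\<^sub>R outer u v"
  by (simp add: vec_eq_iff outer_def)

lemma det_axis_rows_except:
  fixes y :: "real^'n"
  shows "det (\<chi> i. if i = k then y else axis i 1 :: real^'n^'n) = y$k"
proof -
  have "row i (mat 1 :: real^'n^'n) = axis i 1" for i
    by (simp add: vec_eq_iff row_def mat_def axis_def)
  moreover have "(\<Sum>i\<in>UNIV. y$i *s axis i 1) = y"
    by (rule basis_expansion)
  ultimately show ?thesis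
    using cramer_lemma_transpose[of k y "mat 1 :: real^'n^'n"] by (simp only:) simp
qed

lemma det_add_row_multiples:
  fixes A :: "real^'n^'n"
  assumes "k \<notin> T"
  shows "det (\<chi> i. if i \<in> T then row i A + c i *s row k A else row i A) = det A"
  using finite[of T] assms
proof (induction T rule: finite_induct)
  case empty
  then show ?case by (simp add: row_def)
next
  case (insert j T)
  define B where "B = (\<chi> i. if i \<in> T then row i A + c i *s row k A else row i A)"
  have "j \<noteq> k" "row k B = row k A"
    using insert by (auto simp: B_def row_def)
  then have "(\<chi> i. if i \<in> insert j T then row i A + c i *s row k A else row i A)
      = (\<chi> i. if i = j then row j B + c j *s row k B else row i B)"
    using insert.hyps by (auto simp: vec_eq_iff B_def row_def)
  also have "det \<dots> = det B"
    using \<open>j \<noteq> k\<close> by (rule det_row_operation)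
  finally show ?case
    using insert by (simp add: B_def)
qed

lemma det_id_plus_outer_rows:
  fixes x y :: "real^'n"
  shows "det (\<chi> i. if i \<in> T then axis i 1 + x$i *s y else axis i 1 :: real^'n^'n)
    = 1 + (\<Sum>i\<in>T. x$i * y$i)"
  using finite[of T]
proof (induction T rule: finite_induct)
  case empty
  have "(\<chi> i. axis i 1 :: real^'n^'n) = mat 1"
    by (simp add: vec_eq_iff mat_def axis_def)
  then show ?case by simp
next
  case (insert k T)
  define R where "R i = (if i \<in> T then axis i 1 + x$i *s y else axis i 1)" for i
  define C where "C = (\<chi> i. if i = k then y else axis i 1 :: real^'n^'n)"
  have "(\<chi> i. if i \<in> insert k T then axis i 1 + x$i *s y else axis i 1 :: real^'n^'n)
      = (\<chi> i. if i = k then axis i 1 + x$k *s y else R i)"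
    using insert.hyps by (auto simp: vec_eq_iff R_def)
  also have "det \<dots> = det (\<chi> i. if i = k then axis i 1 else R i)
      + x$k * det (\<chi> i. if i = k then y else R i)"
    by (simp add: det_row_add det_row_mul)
  also have "(\<chi> i. if i = k then axis i 1 else R i) = (\<chi> i. R i)"
    using insert.hyps by (auto simp: vec_eq_iff R_def)
  also have "(\<chi> i. if i = k then y else R i) = (\<chi> i. if i \<in> T then row i C + x$i *s row k C else row i C)"
    using insert.hyps by (auto simp: vec_eq_iff R_def C_def row_def)
  finally show ?case
    using insert det_add_row_multiples[of k T C] det_axis_rows_except[of k y]
    by (simp add: R_def C_def)
qed

lemma det_id_plus_outer: "det (mat 1 + outer x y) = 1 + x \<bullet> (y :: real^'n)"
proof -
  have "mat 1 + outer x y = (\<chi> i. if i \<in> UNIV then axis i 1 + x$i *s y else axis i 1)"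
    by (simp add: vec_eq_iff outer_def mat_def axis_def)
  then show ?thesis
    using det_id_plus_outer_rows[of UNIV x y] by (simp add: inner_vec_def)
qed

lemma matrix_vector_mul_matrix_inv:
  fixes A :: "real^'n^'n"
  assumes "invertible A"
  shows "A *v (matrix_inv A *v w) = w"
proof -
  have "A ** matrix_inv A = mat 1"
    using assms unfolding invertible_def matrix_inv_def by (rule someI_ex[THEN conjunct1])
  then show ?thesis by (simp add: matrix_vector_mul_assoc)
qed

lemma det_add_scaled_outer:
  fixes A :: "real^'n^'n"
  assumes "invertible A"
  shows "det (A + c *\<^sub>R outer w w) = det A * (1 + c * (w \<bullet> (matrix_inv A *v w)))"
proof -
  have "A + c *\<^sub>R outer w w = A ** (mat 1 + outer (matrix_inv A *v (c *\<^sub>R w)) w)"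
    by (simp add: matrix_add_ldistrib matrix_mul_outer matrix_vector_mul_matrix_inv[OF assms]
        outer_scaleR_left)
  then show ?thesis
    by (simp add: det_mul det_id_plus_outer inner_commute matrix_vector_mult_scaleR)
qed

lemma invertible_if_coercive:
  fixes A :: "real^'n^'n"
  assumes "\<And>x. x \<bullet> x \<le> x \<bullet> (A *v x)"
  shows "invertible A"
proof -
  have "x = 0" if "A *v x = 0" for x
    using assms[of x] that by (metis inner_eq_zero_iff inner_ge_zero inner_zero_right order_antisym)
  then show ?thesis
    unfolding invertible_left_inverse matrix_left_invertible_ker by blast
qed

lemma coercive_matrix_inv_bounds:
  fixes A :: "real^'n^'n"
  assumes coercive: "\<And>x. x \<bullet> x \<le> x \<bullet> (A *v x)"
  shows "norm (matrix_inv A *v w) \<le> norm w"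
    and "0 \<le> w \<bullet> (matrix_inv A *v w)"
    and "w \<bullet> (matrix_inv A *v w) \<le> (norm w)\<^sup>2"
proof -
  define u where "u = matrix_inv A *v w"
  have "A *v u = w"
    unfolding u_def by (rule matrix_vector_mul_matrix_inv[OF invertible_if_coercive[OF coercive]])
  then have uw: "(norm u)\<^sup>2 \<le> w \<bullet> u"
    using coercive[of u] by (simp add: dot_square_norm inner_commute)
  also have "\<dots> \<le> norm w * norm u"
    by (rule norm_cauchy_schwarz)
  finally have "norm u \<le> norm w"
    by (cases "norm u = 0") (simp_all add: power2_eq_square)
  then show "norm (matrix_inv A *v w) \<le> norm w"
    by (simp add: u_def)
  show "0 \<le> w \<bullet> (matrix_inv A *v w)"
    using uw unfolding u_def by (meson order_trans zero_le_power2)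
  have "w \<bullet> u \<le> norm w * norm u"
    by (rule norm_cauchy_schwarz)
  also have "\<dots> \<le> norm w * norm w"
    using \<open>norm u \<le> norm w\<close> by (simp add: mult_left_mono)
  finally show "w \<bullet> (matrix_inv A *v w) \<le> (norm w)\<^sup>2"
    by (simp add: u_def power2_eq_square)
qed

section \<open>Identity plus a weighted Gram matrix\<close>

definition id_plus_gram :: "real^'p^'n \<Rightarrow> ('p \<Rightarrow> real) \<Rightarrow> 'p set \<Rightarrow> real^'n^'n" where
  "id_plus_gram W g S = mat 1 + (\<Sum>j\<in>S. g j *\<^sub>R outer (column j W) (column j W))"

lemma matrix_vector_mult_sum_left: "(\<Sum>j\<in>S. A j) *v x = (\<Sum>j\<in>S. A j *v x)"
  by (induction S rule: infinite_finite_induct) (auto simp: matrix_vector_mult_add_rdistrib)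

lemma matrix_vector_mult_scaleR_left: "(c *\<^sub>R A) *v x = c *\<^sub>R (A *v x :: real^'m)"
  by (simp add: vec_eq_iff matrix_vector_mult_def sum_distrib_left mult.assoc)

lemma id_plus_gram_inner:
  "y \<bullet> (id_plus_gram W g S *v x) = y \<bullet> x + (\<Sum>j\<in>S. g j * (column j W \<bullet> x) * (column j W \<bullet> y))"
  by (simp add: id_plus_gram_def matrix_vector_mult_add_rdistrib matrix_vector_mult_sum_left
      matrix_vector_mult_scaleR_left outer_mv inner_add_right inner_sum_right inner_commute mult.assoc)

lemma id_plus_gram_coercive:
  assumes "\<And>j. g j \<ge> 0"
  shows "x \<bullet> x \<le> x \<bullet> (id_plus_gram W g S *v x)"
  unfolding id_plus_gram_inner
  by (simp add: assms sum_nonneg mult.assoc)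

lemma id_plus_gram_insert:
  "k \<notin> S \<Longrightarrow> id_plus_gram W g (insert k S) = id_plus_gram W g S + g k *\<^sub>R outer (column k W) (column k W)"
  by (simp add: id_plus_gram_def add_ac)

lemma det_id_plus_gram_insert:
  assumes g: "\<And>j. g j \<ge> 0" and "k \<notin> S"
  obtains q where "0 \<le> q" "q \<le> (norm (column k W))\<^sup>2"
    "det (id_plus_gram W g (insert k S)) = det (id_plus_gram W g S) * (1 + g k * q)"
proof
  let ?q = "column k W \<bullet> (matrix_inv (id_plus_gram W g S) *v column k W)"
  note coercive = id_plus_gram_coercive[OF g]
  show "0 \<le> ?q" "?q \<le> (norm (column k W))\<^sup>2"
    by (rule coercive_matrix_inv_bounds[OF coercive])+
  show "det (id_plus_gram W g (insert k S)) = det (id_plus_gram W g S) * (1 + g k * ?q)"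
    using \<open>k \<notin> S\<close> by (simp add: id_plus_gram_insert det_add_scaled_outer invertible_if_coercive[OF coercive])
qed

lemma det_id_plus_gram_ge_1:
  assumes g: "\<And>j. g j \<ge> 0"
  shows "1 \<le> det (id_plus_gram W g S)"
  using finite[of S]
proof (induction S rule: finite_induct)
  case empty
  then show ?case by (simp add: id_plus_gram_def)
next
  case (insert k S)
  obtain q where "0 \<le> q" "q \<le> (norm (column k W))\<^sup>2"
    and det: "det (id_plus_gram W g (insert k S)) = det (id_plus_gram W g S) * (1 + g k * q)"
    by (rule det_id_plus_gram_insert[OF g insert.hyps(2)])
  then have "1 \<le> 1 + g k * q"
    using g[of k] by simp
  then have "1 * 1 \<le> det (id_plus_gram W g S) * (1 + g k * q)"
    using insert.IH by (intro mult_mono) auto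
  then show ?case
    by (simp add: det)
qed

lemma ln_det_id_plus_gram_union:
  assumes g: "\<And>j. g j \<ge> 0" and "S \<inter> T = {}"
  shows "ln (det (id_plus_gram W g S)) \<le> ln (det (id_plus_gram W g (S \<union> T))) \<and>
    ln (det (id_plus_gram W g (S \<union> T))) \<le> ln (det (id_plus_gram W g S)) + (\<Sum>j\<in>T. g j * (norm (column j W))\<^sup>2)"
  using finite[of T] \<open>S \<inter> T = {}\<close>
proof (induction T rule: finite_induct)
  case empty
  then show ?case by simp
next
  case (insert k T)
  then have "k \<notin> S \<union> T" by auto
  then obtain q where q: "0 \<le> q" "q \<le> (norm (column k W))\<^sup>2" and
    det: "det (id_plus_gram W g (insert k (S \<union> T))) = det (id_plus_gram W g (S \<union> T)) * (1 + g k * q)"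
    by (rule det_id_plus_gram_insert[OF g])
  have "0 \<le> g k * q"
    using q(1) g[of k] by simp
  moreover have "1 \<le> det (id_plus_gram W g (S \<union> T))"
    by (rule det_id_plus_gram_ge_1[OF g])
  ultimately have "ln (det (id_plus_gram W g (insert k (S \<union> T))))
      = ln (det (id_plus_gram W g (S \<union> T))) + ln (1 + g k * q)"
    by (simp add: det ln_mult)
  moreover have "0 \<le> ln (1 + g k * q)"
    using \<open>0 \<le> g k * q\<close> by simp
  moreover have "ln (1 + g k * q) \<le> g k * (norm (column k W))\<^sup>2"
    using q g[of k] by (meson ln_add_one_self_le_self mult_left_mono order_trans zero_le_mult_iff)
  moreover have "ln (det (id_plus_gram W g S)) \<le> ln (det (id_plus_gram W g (S \<union> T))) \<and>
    ln (det (id_plus_gram W g (S \<union> T))) \<le> ln (det (id_plus_gram W g S)) + (\<Sum>j\<in>T. g j * (norm (column j W))\<^sup>2)"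
    using insert.IH insert.prems by blast
  ultimately show ?case
    unfolding Un_insert_right sum.insert[OF insert.hyps] by linarith
qed

section \<open>Effect of dropping the small weights\<close>

lemma power2_norm_vec: "(norm x)\<^sup>2 = (\<Sum>i\<in>UNIV. (x$i)\<^sup>2)" for x :: "real^'n"
  unfolding power2_norm_eq_inner by (simp add: inner_vec_def power2_eq_square)

lemma vector_matrix_mult_nth: "(v v* W) $ j = column j W \<bullet> v"
  by (simp add: column_def inner_vec_def vector_matrix_mult_def mult.commute)

lemma norm_vector_matrix_mult_le_onorm:
  fixes W :: "real^'p^'n"
  shows "norm (v v* W) \<le> onorm (\<lambda>x. W *v x) * norm v"
proof -
  let ?a = "v v* W"
  have "(norm ?a)\<^sup>2 = v \<bullet> (W *v ?a)"
    by (simp add: dot_lmul_matrix flip: dot_square_norm)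
  also have "\<dots> \<le> norm v * norm (W *v ?a)"
    by (rule norm_cauchy_schwarz)
  also have "\<dots> \<le> norm v * (onorm (\<lambda>x. W *v x) * norm ?a)"
    using onorm[OF matrix_vector_mul_bounded_linear[of W]] by (simp add: mult_left_mono)
  finally have "norm ?a * norm ?a \<le> (onorm (\<lambda>x. W *v x) * norm v) * norm ?a"
    by (simp add: power2_eq_square mult_ac)
  then show ?thesis
    using onorm_pos_le[OF matrix_vector_mul_bounded_linear[of W]]
    by (cases "norm ?a = 0") auto
qed

lemma sum_norm_column_le_onorm:
  fixes W :: "real^'p^'n"
  shows "(\<Sum>j\<in>UNIV. (norm (column j W))\<^sup>2) \<le> real CARD('n) * (onorm (\<lambda>x. W *v x))\<^sup>2"
proof -
  have row: "(axis i 1 v* W) $ j = W$i$j" for i j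
    by (simp add: vector_matrix_mult_nth column_def inner_axis)
  have "(\<Sum>j\<in>UNIV. (norm (column j W))\<^sup>2) = (\<Sum>j\<in>UNIV. \<Sum>i\<in>UNIV. (W$i$j)\<^sup>2)"
    by (simp add: power2_norm_vec column_def)
  also have "\<dots> = (\<Sum>i\<in>UNIV. (norm (axis i 1 v* W))\<^sup>2)"
    by (subst sum.swap) (simp add: power2_norm_vec row)
  also have "\<dots> \<le> (\<Sum>i\<in>(UNIV::'n set). (onorm (\<lambda>x. W *v x))\<^sup>2)"
    using norm_vector_matrix_mult_le_onorm[of "axis _ 1" W]
    by (intro sum_mono power_mono) auto
  finally show ?thesis
    by simp
qed

lemma sum_abs_mult_le_norm: "(\<Sum>j\<in>UNIV. \<bar>a$j\<bar> * \<bar>b$j\<bar>) \<le> norm a * norm (b :: real^'n)"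
  using L2_set_mult_ineq[of "\<lambda>j. a$j" "\<lambda>j. b$j" UNIV] by (simp add: norm_vec_def L2_set_def)

lemma ln_det_id_plus_gram_truncation:
  fixes W :: "real^'p^'n"
  assumes g: "\<And>j. 0 \<le> g j" and small: "\<And>j. j \<notin> S \<Longrightarrow> g j \<le> \<delta>" and "0 \<le> \<delta>"
  shows "\<bar>ln (det (id_plus_gram W g UNIV)) - ln (det (id_plus_gram W g S))\<bar>
    \<le> \<delta> * real CARD('n) * (onorm (\<lambda>x. W *v x))\<^sup>2"
proof -
  have "(\<Sum>j\<in>-S. g j * (norm (column j W))\<^sup>2) \<le> (\<Sum>j\<in>-S. \<delta> * (norm (column j W))\<^sup>2)"
    using small by (intro sum_mono mult_right_mono) auto
  also have "\<dots> \<le> (\<Sum>j\<in>UNIV. \<delta> * (norm (column j W))\<^sup>2)"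
    using \<open>0 \<le> \<delta>\<close> by (intro sum_mono2) auto
  also have "\<dots> \<le> \<delta> * (real CARD('n) * (onorm (\<lambda>x. W *v x))\<^sup>2)"
    using sum_norm_column_le_onorm[of W] \<open>0 \<le> \<delta>\<close> by (simp flip: sum_distrib_left add: mult_left_mono)
  finally have "(\<Sum>j\<in>-S. g j * (norm (column j W))\<^sup>2) \<le> \<delta> * real CARD('n) * (onorm (\<lambda>x. W *v x))\<^sup>2"
    by simp
  moreover have "S \<inter> -S = {}" "S \<union> -S = UNIV"
    by auto
  ultimately show ?thesis
    using ln_det_id_plus_gram_union[of g S "-S" W, OF g] by auto
qed

lemma inv_quadratic_id_plus_gram_truncation:
  fixes W :: "real^'p^'n" and z :: "real^'n"
  assumes g: "\<And>j. 0 \<le> g j" and small: "\<And>j. j \<notin> S \<Longrightarrow> g j \<le> \<delta>" and "0 \<le> \<delta>"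
  shows "\<bar>z \<bullet> (matrix_inv (id_plus_gram W g S) *v z) - z \<bullet> (matrix_inv (id_plus_gram W g UNIV) *v z)\<bar>
    \<le> \<delta> * (onorm (\<lambda>x. W *v x))\<^sup>2 * (norm z)\<^sup>2"
proof -
  let ?\<omega> = "onorm (\<lambda>x. W *v x)"
  note coercive = id_plus_gram_coercive[of g, OF g]
  define u where "u = matrix_inv (id_plus_gram W g S) *v z"
  define v where "v = matrix_inv (id_plus_gram W g UNIV) *v z"
  have Gu: "id_plus_gram W g S *v u = z" and Gv: "id_plus_gram W g UNIV *v v = z"
    unfolding u_def v_def by (simp_all add: matrix_vector_mul_matrix_inv invertible_if_coercive[OF coercive])
  define a where "a = v v* W"
  define b where "b = u v* W"
  \<comment> \<open>pairing each of the two linear systems with the other solution\<close>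
  have "z \<bullet> u = u \<bullet> v + (\<Sum>j\<in>UNIV. g j * a$j * b$j)"
    using id_plus_gram_inner[of u W g UNIV v] Gv
    by (simp add: a_def b_def vector_matrix_mult_nth inner_commute)
  moreover have "z \<bullet> v = u \<bullet> v + (\<Sum>j\<in>S. g j * a$j * b$j)"
    using id_plus_gram_inner[of v W g S u] Gu
    by (simp add: a_def b_def vector_matrix_mult_nth inner_commute mult_ac)
  moreover have "(\<Sum>j\<in>UNIV. g j * a$j * b$j) = (\<Sum>j\<in>UNIV - S. g j * a$j * b$j) + (\<Sum>j\<in>S. g j * a$j * b$j)"
    by (simp add: sum.subset_diff[of S UNIV])
  ultimately have "\<bar>z \<bullet> u - z \<bullet> v\<bar> = \<bar>\<Sum>j\<in>UNIV - S. g j * a$j * b$j\<bar>"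
    by simp
  also have "\<dots> \<le> (\<Sum>j\<in>UNIV - S. \<delta> * (\<bar>a$j\<bar> * \<bar>b$j\<bar>))"
    using small g by (intro order_trans[OF sum_abs] sum_mono) (simp add: abs_mult mult.assoc mult_right_mono)
  also have "\<dots> \<le> \<delta> * (\<Sum>j\<in>UNIV. \<bar>a$j\<bar> * \<bar>b$j\<bar>)"
    using \<open>0 \<le> \<delta>\<close> by (simp add: sum_distrib_left sum_mono2)
  also have "\<dots> \<le> \<delta> * (norm a * norm b)"
    using \<open>0 \<le> \<delta>\<close> by (simp add: mult_left_mono sum_abs_mult_le_norm)
  also have "\<dots> \<le> \<delta> * ((?\<omega> * norm z) * (?\<omega> * norm z))"
  proof -
    have "norm u \<le> norm z" "norm v \<le> norm z"
      unfolding u_def v_def by (rule coercive_matrix_inv_bounds(1)[OF coercive])+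
    then have "norm a \<le> ?\<omega> * norm z" "norm b \<le> ?\<omega> * norm z"
      using norm_vector_matrix_mult_le_onorm[of v W] norm_vector_matrix_mult_le_onorm[of u W]
        onorm_pos_le[OF matrix_vector_mul_bounded_linear[of W]]
      unfolding a_def b_def by (meson mult_left_mono order_trans)+
    then show ?thesis
      using \<open>0 \<le> \<delta>\<close> by (intro mult_left_mono mult_mono) (auto intro: order_trans[OF norm_ge_zero])
  qed
  finally show ?thesis
    by (simp add: u_def v_def power2_eq_square mult_ac)
qed

section \<open>The acceptance probabilities\<close>

lemma id_plus_gram_restrict:
  "id_plus_gram W (\<lambda>j. if j \<in> S then g j else 0) UNIV = id_plus_gram W g S"
proof -
  have "(\<Sum>j\<in>UNIV. (if j \<in> S then g j else 0) *\<^sub>R outer (column j W) (column j W))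
      = (\<Sum>j\<in>UNIV. if j \<in> S then g j *\<^sub>R outer (column j W) (column j W) else 0)"
    by (rule sum.cong) auto
  then show ?thesis
    by (simp add: id_plus_gram_def sum.If_cases)
qed

lemma Mmat_diag:
  "Mmat W (\<chi> i j. if i = j then h j else 0) t = id_plus_gram W (\<lambda>j. h j / t) UNIV"
proof -
  have "W ** (\<chi> i j. if i = j then h j else 0) ** transpose W
      = (\<Sum>j\<in>UNIV. h j *\<^sub>R outer (column j W) (column j W))"
    by (simp add: vec_eq_iff matrix_matrix_mult_def transpose_def outer_def column_def if_distrib mult_ac cong: if_cong)
  then show ?thesis
    by (simp add: Mmat_def id_plus_gram_def scaleR_sum_right)
qed

lemma Mmat_Dmat: "Mmat W (Dmat eta) t = id_plus_gram W (\<lambda>j. 1 / (t * eta$j)) UNIV"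
  unfolding Dmat_def Mmat_diag by (simp add: mult.commute)

lemma Mmat_Dmat_delta:
  "Mmat W (Dmat_delta \<delta> \<xi> \<xi>s eta) t
    = id_plus_gram W (\<lambda>j. 1 / (t * eta$j)) {j. max (1/\<xi>) (1/\<xi>s) * (1 / eta$j) > \<delta>}"
proof -
  let ?S = "{j. max (1/\<xi>) (1/\<xi>s) * (1 / eta$j) > \<delta>}"
  have "Dmat_delta \<delta> \<xi> \<xi>s eta = (\<chi> i j. if i = j then (if j \<in> ?S then 1 / eta$j else 0) else 0)"
    by (simp add: Dmat_delta_def vec_eq_iff)
  moreover have "(\<lambda>j. (if j \<in> ?S then 1 / eta$j else 0) / t) = (\<lambda>j. if j \<in> ?S then 1 / (t * eta$j) else 0)"
    by (simp add: fun_eq_iff mult.commute)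
  ultimately show ?thesis
    by (simp only: Mmat_diag id_plus_gram_restrict)
qed

lemma abs_ln_diff_le:
  fixes x y c :: real
  assumes "0 < c" "c \<le> x" "c \<le> y"
  shows "\<bar>ln x - ln y\<bar> \<le> \<bar>x - y\<bar> / c"
proof -
  have "ln x - ln y \<le> \<bar>x - y\<bar> / c" if "c \<le> x" "c \<le> y" for x y
  proof -
    have "ln x - ln y = ln (x / y)"
      using that \<open>0 < c\<close> by (simp add: ln_div)
    also have "\<dots> \<le> x / y - 1"
      using that \<open>0 < c\<close> by (intro ln_le_minus_one) auto
    also have "\<dots> = (x - y) / y"
      using that \<open>0 < c\<close> by (simp add: field_simps)
    also have "\<dots> \<le> \<bar>x - y\<bar> / c"
      using that \<open>0 < c\<close> by (simp add: frac_le)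
    finally show ?thesis .
  qed
  from this[OF assms(2,3)] this[OF assms(3,2)] show ?thesis
    by (simp add: abs_minus_commute)
qed

lemma ln_lik:
  fixes M :: "real^'n^'n"
  assumes "0 < det M" "0 < b0 + z \<bullet> (matrix_inv M *v z)"
  shows "0 < lik a0 b0 z M"
    and "ln (lik a0 b0 z M)
      = - ln (det M) / 2 - (real CARD('n) + a0) / 2 * ln (b0 + z \<bullet> (matrix_inv M *v z))"
  using assms by (simp_all add: lik_def ln_mult ln_powr field_simps)

lemma ln_lik_id_plus_gram:
  fixes W :: "real^'p^'n" and z :: "real^'n"
  assumes "0 < b0" and g: "\<And>j. 0 \<le> g j"
  shows "0 < lik a0 b0 z (id_plus_gram W g S)"
    and "ln (lik a0 b0 z (id_plus_gram W g S)) = - ln (det (id_plus_gram W g S)) / 2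
      - (real CARD('n) + a0) / 2 * ln (b0 + z \<bullet> (matrix_inv (id_plus_gram W g S) *v z))"
proof -
  have "0 \<le> z \<bullet> (matrix_inv (id_plus_gram W g S) *v z)"
    by (rule coercive_matrix_inv_bounds(2)[OF id_plus_gram_coercive[of g, OF g]])
  moreover have "0 < det (id_plus_gram W g S)"
    using det_id_plus_gram_ge_1[of g W S] g by simp
  ultimately show "0 < lik a0 b0 z (id_plus_gram W g S)"
    and "ln (lik a0 b0 z (id_plus_gram W g S)) = - ln (det (id_plus_gram W g S)) / 2
      - (real CARD('n) + a0) / 2 * ln (b0 + z \<bullet> (matrix_inv (id_plus_gram W g S) *v z))"
    using \<open>0 < b0\<close> by (simp_all add: ln_lik)
qed

lemma ln_lik_id_plus_gram_truncation:
  fixes W :: "real^'p^'n" and z :: "real^'n"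
  assumes "0 \<le> a0" "0 < b0"
    and g: "\<And>j. 0 \<le> g j" and small: "\<And>j. j \<notin> S \<Longrightarrow> g j \<le> \<delta>" and "0 \<le> \<delta>"
  shows "\<bar>ln (lik a0 b0 z (id_plus_gram W g UNIV)) - ln (lik a0 b0 z (id_plus_gram W g S))\<bar>
      \<le> (real CARD('n) + (real CARD('n) + a0) * (norm z)\<^sup>2 / b0) * (onorm (\<lambda>x. W *v x))\<^sup>2 * \<delta> / 2"
proof -
  let ?N = "real CARD('n)" and ?\<omega> = "onorm (\<lambda>x. W *v x)"
  note coercive = id_plus_gram_coercive[of g, OF g]
  define x where "x = z \<bullet> (matrix_inv (id_plus_gram W g UNIV) *v z)"
  define y where "y = z \<bullet> (matrix_inv (id_plus_gram W g S) *v z)"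
  have "0 \<le> x" "0 \<le> y"
    unfolding x_def y_def by (rule coercive_matrix_inv_bounds(2)[OF coercive])+
  note full = ln_lik_id_plus_gram(2)[where z = z and W = W and g = g and S = UNIV,
      OF \<open>0 < b0\<close> g, folded x_def]
  note trunc = ln_lik_id_plus_gram(2)[where z = z and W = W and g = g and S = S,
      OF \<open>0 < b0\<close> g, folded y_def]
  have det: "\<bar>ln (det (id_plus_gram W g UNIV)) - ln (det (id_plus_gram W g S))\<bar> \<le> \<delta> * ?N * ?\<omega>\<^sup>2"
    by (rule ln_det_id_plus_gram_truncation[OF g small \<open>0 \<le> \<delta>\<close>])
  have "\<bar>ln (b0 + x) - ln (b0 + y)\<bar> \<le> \<bar>(b0 + x) - (b0 + y)\<bar> / b0"
    using \<open>0 < b0\<close> \<open>0 \<le> x\<close> \<open>0 \<le> y\<close> by (intro abs_ln_diff_le) auto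
  also have "\<dots> = \<bar>x - y\<bar> / b0"
    by simp
  also have "\<dots> \<le> \<delta> * ?\<omega>\<^sup>2 * (norm z)\<^sup>2 / b0"
    using inv_quadratic_id_plus_gram_truncation[where W = W and z = z and g = g and S = S and \<delta> = \<delta>,
        OF g small \<open>0 \<le> \<delta>\<close>] \<open>0 < b0\<close>
    by (simp add: x_def y_def abs_minus_commute divide_right_mono)
  finally have quad: "\<bar>ln (b0 + x) - ln (b0 + y)\<bar> \<le> \<delta> * ?\<omega>\<^sup>2 * (norm z)\<^sup>2 / b0" .
  have "\<bar>ln (lik a0 b0 z (id_plus_gram W g UNIV)) - ln (lik a0 b0 z (id_plus_gram W g S))\<bar>
      = \<bar>(ln (det (id_plus_gram W g S)) - ln (det (id_plus_gram W g UNIV))) / 2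
        + (?N + a0) / 2 * (ln (b0 + y) - ln (b0 + x))\<bar>"
    unfolding full trunc by (simp add: algebra_simps diff_divide_distrib)
  also have "\<dots> \<le> \<bar>ln (det (id_plus_gram W g UNIV)) - ln (det (id_plus_gram W g S))\<bar> / 2
        + (?N + a0) / 2 * \<bar>ln (b0 + x) - ln (b0 + y)\<bar>"
    using \<open>0 \<le> a0\<close> by (simp add: abs_mult abs_minus_commute order_trans[OF abs_triangle_ineq])
  also have "\<dots> \<le> \<delta> * ?N * ?\<omega>\<^sup>2 / 2 + (?N + a0) / 2 * (\<delta> * ?\<omega>\<^sup>2 * (norm z)\<^sup>2 / b0)"
    using det quad \<open>0 \<le> a0\<close> by (intro add_mono mult_left_mono divide_right_mono) auto
  also have "\<dots> = (?N + (?N + a0) * (norm z)\<^sup>2 / b0) * ?\<omega>\<^sup>2 * \<delta> / 2"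
    using \<open>0 < b0\<close> by (simp add: field_simps)
  finally show "\<bar>ln (lik a0 b0 z (id_plus_gram W g UNIV)) - ln (lik a0 b0 z (id_plus_gram W g S))\<bar>
      \<le> (?N + (?N + a0) * (norm z)\<^sup>2 / b0) * ?\<omega>\<^sup>2 * \<delta> / 2" .
qed

lemma ln_lik_Mmat_truncation:
  fixes W :: "real^'p^'n" and z :: "real^'n" and eta :: "real^'p"
  assumes "0 \<le> a0" "0 < b0" "0 \<le> \<delta>" "0 < t" and t: "1 / t \<le> max (1/\<xi>) (1/\<xi>s)"
    and eta: "\<forall>j. 0 < eta$j"
  shows "0 < lik a0 b0 z (Mmat W (Dmat eta) t)"
    and "0 < lik a0 b0 z (Mmat W (Dmat_delta \<delta> \<xi> \<xi>s eta) t)"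
    and "\<bar>ln (lik a0 b0 z (Mmat W (Dmat eta) t)) - ln (lik a0 b0 z (Mmat W (Dmat_delta \<delta> \<xi> \<xi>s eta) t))\<bar>
      \<le> (real CARD('n) + (real CARD('n) + a0) * (norm z)\<^sup>2 / b0) * (onorm (\<lambda>x. W *v x))\<^sup>2 * \<delta> / 2"
proof -
  define g where "g j = 1 / (t * eta$j)" for j
  define S where "S = {j. max (1/\<xi>) (1/\<xi>s) * (1 / eta$j) > \<delta>}"
  have g: "\<And>j. 0 \<le> g j"
    using \<open>0 < t\<close> eta by (simp add: g_def less_imp_le)
  have small: "g j \<le> \<delta>" if "j \<notin> S" for j
  proof -
    have "g j = 1 / t * (1 / eta$j)"
      by (simp add: g_def)
    also have "\<dots> \<le> max (1/\<xi>) (1/\<xi>s) * (1 / eta$j)"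
      using t eta by (intro mult_right_mono) (auto simp: less_imp_le)
    also have "\<dots> \<le> \<delta>"
      using that by (simp add: S_def)
    finally show ?thesis .
  qed
  show "0 < lik a0 b0 z (Mmat W (Dmat eta) t)"
    and "0 < lik a0 b0 z (Mmat W (Dmat_delta \<delta> \<xi> \<xi>s eta) t)"
    and "\<bar>ln (lik a0 b0 z (Mmat W (Dmat eta) t)) - ln (lik a0 b0 z (Mmat W (Dmat_delta \<delta> \<xi> \<xi>s eta) t))\<bar>
      \<le> (real CARD('n) + (real CARD('n) + a0) * (norm z)\<^sup>2 / b0) * (onorm (\<lambda>x. W *v x))\<^sup>2 * \<delta> / 2"
    unfolding Mmat_Dmat Mmat_Dmat_delta g_def[symmetric] S_def[symmetric]
    using ln_lik_id_plus_gram(1)[where z = z and W = W and g = g, OF \<open>0 < b0\<close> g]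
      ln_lik_id_plus_gram_truncation[where W = W and z = z and g = g and S = S and \<delta> = \<delta>,
        OF \<open>0 \<le> a0\<close> \<open>0 < b0\<close> g small \<open>0 \<le> \<delta>\<close>]
    by blast+
qed

lemma pi_xi_pos: "0 < t \<Longrightarrow> 0 < pi_xi t"
  by (simp add: pi_xi_def)

lemma qfun_pos_ln:
  assumes "0 < \<xi>" "0 < \<xi>s" "0 < lik a0 b0 z (Mmat W D \<xi>)" "0 < lik a0 b0 z (Mmat W D \<xi>s)"
  shows "0 < qfun a0 b0 W z D \<xi> \<xi>s"
    and "ln (qfun a0 b0 W z D \<xi> \<xi>s) = ln (lik a0 b0 z (Mmat W D \<xi>s)) - ln (lik a0 b0 z (Mmat W D \<xi>))
      + ln (pi_xi \<xi>s * \<xi>s) - ln (pi_xi \<xi> * \<xi>)"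
  using assms pi_xi_pos[of \<xi>] pi_xi_pos[of \<xi>s] by (simp_all add: qfun_def ln_div ln_mult)

lemma abs_min_one_diff_le:
  fixes a b K :: real
  assumes "0 < a" "0 < b" "\<bar>ln a - ln b\<bar> \<le> K"
  shows "\<bar>min 1 a - min 1 b\<bar> \<le> exp K - 1"
proof -
  have "1 \<le> exp K"
    using assms(3) by simp
  have ordered: "0 \<le> min 1 a - min 1 b \<and> min 1 a - min 1 b \<le> exp K - 1"
    if "0 < b" "b \<le> a" "ln a - ln b \<le> K" for a b
  proof (cases "1 \<le> b")
    case True
    then show ?thesis
      using \<open>b \<le> a\<close> \<open>1 \<le> exp K\<close> by simp
  next
    case False
    have "a = b * exp (ln a - ln b)"
      using that by (simp add: exp_diff)
    also have "\<dots> \<le> b * exp K"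
      using that by simp
    finally have "min 1 a - min 1 b \<le> b * (exp K - 1)"
      using False by (simp add: algebra_simps)
    also have "\<dots> \<le> exp K - 1"
      using False \<open>1 \<le> exp K\<close> \<open>0 < b\<close> by (simp add: mult_left_le_one_le)
    finally show ?thesis
      using \<open>b \<le> a\<close> by simp
  qed
  show ?thesis
  proof (cases "b \<le> a")
    case True
    with ordered[of b a] assms show ?thesis
      by simp
  next
    case False
    with ordered[of a b] assms show ?thesis
      by (simp add: abs_minus_commute)
  qed
qed

lemma exp_minus_one_le: "exp x - 1 \<le> x * exp x" for x :: real
proof -
  have "(1 - x) * exp x \<le> exp (- x) * exp x"
    using exp_ge_add_one_self[of "- x"] by (intro mult_right_mono) auto
  then show ?thesis
    by (simp add: algebra_simps flip: exp_add)
qed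

lemma exp_minus_one_le_linear:
  fixes K \<delta> :: real
  assumes "0 \<le> K" "0 \<le> \<delta>" "\<delta> \<le> 1"
  shows "exp (K * \<delta>) - 1 \<le> K * exp K * \<delta>"
proof -
  have "exp (K * \<delta>) - 1 \<le> K * \<delta> * exp (K * \<delta>)"
    by (rule exp_minus_one_le)
  also have "\<dots> \<le> K * \<delta> * exp K"
    using assms by (intro mult_left_mono) (simp_all add: mult_right_le_one_le)
  finally show ?thesis
    by (simp add: mult_ac)
qed

lemma abs_alpha_diff_le:
  fixes W :: "real^'p^'n" and z :: "real^'n" and eta :: "real^'p"
  assumes "0 \<le> a0" "0 < b0" "0 \<le> \<delta>" "0 < \<xi>" "0 < \<xi>s" "\<forall>j. 0 < eta$j"
  shows "\<bar>alpha a0 b0 W z eta \<xi> \<xi>s - alpha_approx \<delta> a0 b0 W z eta \<xi> \<xi>s\<bar>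
    \<le> exp ((real CARD('n) + (real CARD('n) + a0) * (norm z)\<^sup>2 / b0) * (onorm (\<lambda>x. W *v x))\<^sup>2 * \<delta>) - 1"
proof -
  let ?K = "(real CARD('n) + (real CARD('n) + a0) * (norm z)\<^sup>2 / b0) * (onorm (\<lambda>x. W *v x))\<^sup>2"
  have t: "1/\<xi> \<le> max (1/\<xi>) (1/\<xi>s)" "1/\<xi>s \<le> max (1/\<xi>) (1/\<xi>s)"
    by auto
  note lik\<xi> = ln_lik_Mmat_truncation[where W = W and z = z and eta = eta and t = \<xi>,
      OF assms(1-3) \<open>0 < \<xi>\<close> t(1) \<open>\<forall>j. 0 < eta$j\<close>]
  note lik\<xi>s = ln_lik_Mmat_truncation[where W = W and z = z and eta = eta and t = \<xi>s,
      OF assms(1-3) \<open>0 < \<xi>s\<close> t(2) \<open>\<forall>j. 0 < eta$j\<close>]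
  note ln_q = qfun_pos_ln(2)[OF \<open>0 < \<xi>\<close> \<open>0 < \<xi>s\<close> lik\<xi>(1) lik\<xi>s(1)]
  note ln_q\<delta> = qfun_pos_ln(2)[OF \<open>0 < \<xi>\<close> \<open>0 < \<xi>s\<close> lik\<xi>(2) lik\<xi>s(2)]
  have "ln (qfun a0 b0 W z (Dmat eta) \<xi> \<xi>s) - ln (qfun a0 b0 W z (Dmat_delta \<delta> \<xi> \<xi>s eta) \<xi> \<xi>s)
      = (ln (lik a0 b0 z (Mmat W (Dmat eta) \<xi>s)) - ln (lik a0 b0 z (Mmat W (Dmat_delta \<delta> \<xi> \<xi>s eta) \<xi>s)))
        - (ln (lik a0 b0 z (Mmat W (Dmat eta) \<xi>)) - ln (lik a0 b0 z (Mmat W (Dmat_delta \<delta> \<xi> \<xi>s eta) \<xi>)))"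
    unfolding ln_q ln_q\<delta> by simp
  then have "\<bar>ln (qfun a0 b0 W z (Dmat eta) \<xi> \<xi>s) - ln (qfun a0 b0 W z (Dmat_delta \<delta> \<xi> \<xi>s eta) \<xi> \<xi>s)\<bar>
      \<le> \<bar>ln (lik a0 b0 z (Mmat W (Dmat eta) \<xi>s)) - ln (lik a0 b0 z (Mmat W (Dmat_delta \<delta> \<xi> \<xi>s eta) \<xi>s))\<bar>
        + \<bar>ln (lik a0 b0 z (Mmat W (Dmat eta) \<xi>)) - ln (lik a0 b0 z (Mmat W (Dmat_delta \<delta> \<xi> \<xi>s eta) \<xi>))\<bar>"
    by (simp only: abs_triangle_ineq4)
  also have "\<dots> \<le> ?K * \<delta> / 2 + ?K * \<delta> / 2"
    using lik\<xi>s(3) lik\<xi>(3) by (rule add_mono)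
  finally have "\<bar>ln (qfun a0 b0 W z (Dmat eta) \<xi> \<xi>s) - ln (qfun a0 b0 W z (Dmat_delta \<delta> \<xi> \<xi>s eta) \<xi> \<xi>s)\<bar>
      \<le> ?K * \<delta>"
    by linarith
  then show ?thesis
    unfolding alpha_def alpha_approx_def
    by (intro abs_min_one_diff_le qfun_pos_ln(1) lik\<xi>(1,2) lik\<xi>s(1,2) assms)
qed

theorem mainTheorem3:
  fixes W :: "real^'p^'n" and z :: "real^'n" and a0 b0 :: real
  assumes a0: "a0 > 0" and b0: "b0 > 0"
  shows "(\<forall>\<delta> > 0. \<forall>\<xi> > 0. \<forall>\<xi>s > 0. \<forall>eta :: real^'p. (\<forall>j. eta $ j > 0) \<longrightarrow>
            \<bar>alpha a0 b0 W z eta \<xi> \<xi>s - alpha_approx \<delta> a0 b0 W z eta \<xi> \<xi>s\<bar>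
              \<le> exp ((real CARD('n) + (real CARD('n) + a0) * (norm z)\<^sup>2 / b0)
                      * (onorm (\<lambda>x. W *v x))\<^sup>2 * \<delta>) - 1)
       \<and> (\<exists>C. \<forall>\<^sub>F \<delta> in at_right 0. \<forall>\<xi> > 0. \<forall>\<xi>s > 0. \<forall>eta :: real^'p. (\<forall>j. eta $ j > 0) \<longrightarrow>
            \<bar>alpha a0 b0 W z eta \<xi> \<xi>s - alpha_approx \<delta> a0 b0 W z eta \<xi> \<xi>s\<bar> \<le> C * \<delta>)"
proof -
  let ?K = "(real CARD('n) + (real CARD('n) + a0) * (norm z)\<^sup>2 / b0) * (onorm (\<lambda>x. W *v x))\<^sup>2"
  have "0 \<le> ?K"
    using a0 b0 by simp
  have bound: "\<bar>alpha a0 b0 W z eta \<xi> \<xi>s - alpha_approx \<delta> a0 b0 W z eta \<xi> \<xi>s\<bar> \<le> exp (?K * \<delta>) - 1"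
    if "0 < \<delta>" "0 < \<xi>" "0 < \<xi>s" "\<forall>j. 0 < eta$j" for \<delta> \<xi> \<xi>s eta
    using abs_alpha_diff_le[of a0 b0 \<delta> \<xi> \<xi>s eta W z] that a0 b0 by simp
  have "\<forall>\<^sub>F \<delta> in at_right 0. \<forall>\<xi> > 0. \<forall>\<xi>s > 0. \<forall>eta :: real^'p. (\<forall>j. eta $ j > 0) \<longrightarrow>
      \<bar>alpha a0 b0 W z eta \<xi> \<xi>s - alpha_approx \<delta> a0 b0 W z eta \<xi> \<xi>s\<bar> \<le> ?K * exp ?K * \<delta>"
    using eventually_at_right_real[OF zero_less_one]
  proof (rule eventually_mono, intro allI impI)
    fix \<delta> \<xi> \<xi>s :: real and eta :: "real^'p"
    assume "\<delta> \<in> {0<..<1}" "0 < \<xi>" "0 < \<xi>s" "\<forall>j. 0 < eta$j"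
    then have "\<bar>alpha a0 b0 W z eta \<xi> \<xi>s - alpha_approx \<delta> a0 b0 W z eta \<xi> \<xi>s\<bar> \<le> exp (?K * \<delta>) - 1"
      by (intro bound) auto
    also have "\<dots> \<le> ?K * exp ?K * \<delta>"
      using \<open>\<delta> \<in> {0<..<1}\<close> by (intro exp_minus_one_le_linear \<open>0 \<le> ?K\<close>) auto
    finally show "\<bar>alpha a0 b0 W z eta \<xi> \<xi>s - alpha_approx \<delta> a0 b0 W z eta \<xi> \<xi>s\<bar> \<le> ?K * exp ?K * \<delta>" .
  qed
  with bound show ?thesis
    by blast
qed

end
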